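(* Let $X$ be a connected precolored graph and $Y$ any precolored graph. Then $A(\overline X*Y)=A(X*Y)$, i.e. the two quotients of $A(X_{N})$ ($N$ the number of vertices of $X*Y$) defined by $\overline X*Y$ and by $X*Y$ coincide (the identity on generators induces an isomorphism).
   Context: A precolored graph $X=(V,E)$ is a finite set $V$ with a family $E=\{E_1,\dots,E_p\}$ of disjoint subsets of $V\times V-\Delta_V$. Its completion $\overline X=(V,\overline E)$ is the colored graph with partition $\overline E=\{E_1,\dots,E_p,E_{p+1}\}$ of $V\times V-\Delta_V$, where $E_{p+1}$ is the set of remaining (missing) pairs. $X$ is connected if the oriented graph $(V,\bigcup_iE_i)$ is connected disregarding orientations. For a colored graph with partition $\{C_1,\dots,C_\ell\}$ on $N$ vertices, its Laplacian is $d_{xx}=0$, $d_{xy}=c(k)$ for $(x,y)\in C_k$ ($c$ injective into ${\mathbb C}$), and $A(\cdot)$ is the quotient of $A(X_N)$ (the universal C*-algebra generated by the entries of an $N\times N$ magic biunitary $w$, i.e. projections with rows and columns summing to $1$) by $wd=dw$; for a precolored graph $X$, $A(X):=A(\overline X)$. Free product (also for precolored graphs): for $X=(T,\{E_r\}_{r\le p})$, $Y=(Z,\{F_s\}_{s\le q})$, $X*Y=(T\times Z,\{E_r^\circ\}\cup\{F_s^\circ\})$ with $E_r^\circ=\{(i\alpha,j\alpha)\mid(i,j)\in E_r,\alpha\in Z\}$, $F_s^\circ=\{(i\alpha,j\beta)\mid i,j\in T,(\alpha,\beta)\in F_s\}$. *)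

theory Defs
  imports Complex_Main
begin

text \<open>Unital C*-algebras (abstractly): a complex Banach algebra with unit, an involution
  and the C*-identity.  Complex scalar multiplication is the operation cscale.\<close>

class cstar_algebra = real_normed_algebra_1 + complete_space +
  fixes cscale :: "complex \<Rightarrow> 'a \<Rightarrow> 'a"
    and adj :: "'a \<Rightarrow> 'a"
  assumes cscale_of_real: "cscale (complex_of_real r) x = scaleR r x"
    and cscale_add_left: "cscale (a + b) x = cscale a x + cscale b x"
    and cscale_add_right: "cscale a (x + y) = cscale a x + cscale a y"
    and cscale_cscale: "cscale a (cscale b x) = cscale (a * b) x"
    and cscale_mult_left: "cscale a (x * y) = cscale a x * y"
    and cscale_mult_right: "cscale a (x * y) = x * cscale a y"
    and norm_cscale: "norm (cscale a x) = cmod a * norm x"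
    and adj_adj: "adj (adj x) = x"
    and adj_add: "adj (x + y) = adj x + adj y"
    and adj_mult: "adj (x * y) = adj y * adj x"
    and adj_cscale: "adj (cscale a x) = cscale (cnj a) (adj x)"
    and cstar_identity: "norm (adj x * x) = (norm x)\<^sup>2"

definition precolored :: "'a set \<Rightarrow> ('a \<times> 'a) set list \<Rightarrow> bool" where
  "precolored V E \<longleftrightarrow> finite V \<and>
     (\<forall>i < length E. E ! i \<subseteq> V \<times> V - Id_on V) \<and>
     (\<forall>i < length E. \<forall>j < length E. i \<noteq> j \<longrightarrow> E ! i \<inter> E ! j = {})"

definition completion :: "'a set \<Rightarrow> ('a \<times> 'a) set list \<Rightarrow> ('a \<times> 'a) set list" where
  "completion V E = E @ [(V \<times> V - Id_on V) - \<Union> (set E)]"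

definition pc_connected :: "'a set \<Rightarrow> ('a \<times> 'a) set list \<Rightarrow> bool" where
  "pc_connected V E \<longleftrightarrow>
     (let U = \<Union> (set E) in \<forall>x\<in>V. \<forall>y\<in>V. (x, y) \<in> (U \<union> U\<inverse>)\<^sup>*)"

definition free_prod_edges ::
  "('a \<times> 'a) set list \<Rightarrow> 'b set \<Rightarrow> 'a set \<Rightarrow> ('b \<times> 'b) set list
     \<Rightarrow> (('a \<times> 'b) \<times> ('a \<times> 'b)) set list" where
  "free_prod_edges E Z T F =
     map (\<lambda>Er. {((i, \<alpha>), (j, \<alpha>)) | i j \<alpha>. (i, j) \<in> Er \<and> \<alpha> \<in> Z}) E @
     map (\<lambda>Fs. {((i, \<alpha>), (j, \<beta>)) | i j \<alpha> \<beta>. i \<in> T \<and> j \<in> T \<and> (\<alpha>, \<beta>) \<in> Fs}) F"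

definition laplacian :: "('a \<times> 'a) set list \<Rightarrow> (nat \<Rightarrow> complex) \<Rightarrow> 'a \<Rightarrow> 'a \<Rightarrow> complex" where
  "laplacian C c x y =
     (if x = y then 0 else c (THE k. k < length C \<and> (x, y) \<in> C ! k))"

definition magic_biunitary :: "'v set \<Rightarrow> ('v \<Rightarrow> 'v \<Rightarrow> 'b::cstar_algebra) \<Rightarrow> bool" where
  "magic_biunitary V w \<longleftrightarrow>
     (\<forall>x\<in>V. \<forall>y\<in>V. adj (w x y) = w x y \<and> w x y * w x y = w x y) \<and>
     (\<forall>x\<in>V. (\<Sum>y\<in>V. w x y) = 1) \<and>
     (\<forall>y\<in>V. (\<Sum>x\<in>V. w x y) = 1)"

text \<open>The relation w d = d w, entrywise.\<close>

definition commutes_lap :: "'v set \<Rightarrow> ('v \<Rightarrow> 'v \<Rightarrow> 'b::cstar_algebra)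
     \<Rightarrow> ('v \<Rightarrow> 'v \<Rightarrow> complex) \<Rightarrow> bool" where
  "commutes_lap V w d \<longleftrightarrow>
     (\<forall>x\<in>V. \<forall>z\<in>V. (\<Sum>y\<in>V. cscale (d y z) (w x y)) = (\<Sum>y\<in>V. cscale (d x y) (w y z)))"

end

theory Submission
  imports Defs
begin

(*
  The Laplacian of a colored graph takes distinct values on distinct colour classes, so a magic
  unitary w commutes with it iff w x a * w b z = 0 whenever (a, z) and (x, b) lie in different
  classes or exactly one of them is diagonal, i.e. iff w commutes with the 0-1 matrix of every
  class. The relations commuting with w are closed under union, intersection, difference,
  converse and composition. Composition uses that the entries of a row or column of w are pairwise
  orthogonal projections; in an abstract C*-algebra this follows from the C*-identity, which makes
  a projection e an extreme point of the unit ball of e A e (averaging (e + z h)^n over roots of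
  unity z bounds n * norm h for every n).

  The colour classes of the completion of X * Y and of Xbar * Y are the same, except that the
  class R of pairs missing from X * Y is split in Xbar * Y into R \<inter> S and R - S, where S relates
  vertices of the same copy of X. On the vertex set, S is the reflexive transitive closure of the
  symmetrised copies of the edges of X when X is connected, so w commutes with S as soon as it
  commutes with the edges of X * Y; then w commutes with R iff it commutes with R \<inter> S and R - S.
*)

section \<open>Binomial expansions and roots of unity\<close>

lemma power_one_plus_binomial:
  fixes y :: "'a::ring_1"
  shows "(1 + y) ^ n = (\<Sum>k\<le>n. of_nat (n choose k) * y ^ k)"
proof (induction n)
  case (Suc n)
  have "(1 + y) ^ Suc n = (1 + y) ^ n * y + (1 + y) ^ n"
    by (simp only: power_Suc2 distrib_left mult_1_right add.commute)
  also have "\<dots> = (\<Sum>k\<le>n. of_nat (n choose k) * y ^ Suc k) + (\<Sum>k\<le>Suc n. of_nat (n choose k) * y ^ k)"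
    by (simp add: Suc sum_distrib_right mult.assoc power_commutes binomial_eq_0)
  also have "\<dots> = (\<Sum>k\<le>Suc n. of_nat (Suc n choose k) * y ^ k)"
    by (simp only: sum.atMost_Suc_shift binomial_Suc_Suc of_nat_add distrib_right sum.distrib) simp
  finally show ?case .
qed simp

lemma corner_power_one_plus:
  fixes e y :: "'a::ring_1"
  assumes "e * e = e" "e * y = y" "y * e = y" "n \<ge> 1"
  shows "e * (1 + y) ^ n = (e + y) ^ n"
  using assms(4)
proof (induction n rule: dec_induct)
  case (step n)
  have "(e + y) ^ n * e = (e + y) ^ n"
    using step(1) assms(1,3) by (induction n rule: dec_induct) (simp_all add: algebra_simps mult.assoc)
  then have "e * (1 + y) ^ Suc n = (e + y) ^ n * (e * (1 + y))"
    using step(3) by (metis mult.assoc power_Suc2)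
  also have "e * (1 + y) = e + y"
    using assms(2) by (simp add: algebra_simps)
  finally show ?case by (simp only: power_Suc2)
qed (use assms in \<open>simp add: algebra_simps\<close>)

definition unit_root :: "nat \<Rightarrow> complex" where
  "unit_root N = cis (2 * pi / real N)"

lemma unit_root_power: "unit_root N ^ m = cis (2 * pi * real m / real N)"
  by (simp add: unit_root_def DeMoivre mult_ac)

lemma unit_root_power_self: "N > 0 \<Longrightarrow> unit_root N ^ N = 1"
  by (simp add: unit_root_power complex_eq_iff)

lemma sum_unit_root_powers:
  assumes "N > 0"
  shows "(\<Sum>j<N. (unit_root N ^ m) ^ j) = (if N dvd m then of_nat N else 0)"
proof (cases "N dvd m")
  case True
  then obtain q where "m = N * q" by blast
  then have "unit_root N ^ m = 1"
    using assms by (simp add: power_mult unit_root_power_self)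
  then show ?thesis using True by simp
next
  case False
  have "unit_root N ^ m = (unit_root N ^ N) ^ (m div N) * unit_root N ^ (m mod N)"
    by (simp flip: power_mult power_add)
  also have "\<dots> = unit_root N ^ (m mod N)"
    using assms by (simp add: unit_root_power_self)
  also have "\<dots> \<noteq> 1"
  proof
    assume "unit_root N ^ (m mod N) = 1"
    then have "cis (2 * pi * real (m mod N) / real N) = cis (2 * pi * real 0 / real N)"
      by (simp add: unit_root_power)
    then have "m mod N = 0"
      by (rule inj_onD[OF bij_betw_imp_inj_on[OF bij_betw_roots_unity[OF assms]]]) (use assms in auto)
    then show False using False by (simp add: mod_eq_0_iff_dvd)
  qed
  finally have "unit_root N ^ m \<noteq> 1" .
  moreover have "(unit_root N ^ m) ^ N = 1"
    using assms by (simp add: power_mult[symmetric] mult.commute[of m] power_mult unit_root_power_self)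
  ultimately show ?thesis
    using False by (simp add: geometric_sum)
qed


section \<open>Projections in C*-algebras\<close>

lemma cscale_one [simp]: "cscale 1 (x::'a::cstar_algebra) = x"
  using cscale_of_real[of 1 x] by simp

lemma cscale_zero_left [simp]: "cscale 0 (x::'a::cstar_algebra) = 0"
  using cscale_of_real[of 0 x] by simp

lemma cscale_zero_right [simp]: "cscale a (0::'a::cstar_algebra) = 0"
  using cscale_add_right[of a "0::'a" 0] by simp

lemma cscale_minus_left: "cscale (- a) (x::'a::cstar_algebra) = - cscale a x"
  using cscale_add_left[of a "- a" x] by (simp add: eq_neg_iff_add_eq_0 add.commute)

lemma cscale_diff_left: "cscale (a - b) (x::'a::cstar_algebra) = cscale a x - cscale b x"
  using cscale_add_left[of a "- b" x] by (simp add: cscale_minus_left)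

lemma cscale_of_nat: "cscale (of_nat n) (x::'a::cstar_algebra) = of_nat n * x"
  using cscale_of_real[of "real n" x] by (simp add: scaleR_conv_of_real)

lemma cscale_mult_cscale: "cscale a (x::'a::cstar_algebra) * cscale b y = cscale (a * b) (x * y)"
  by (simp flip: cscale_mult_left cscale_mult_right add: cscale_cscale mult.commute)

lemma cscale_power: "cscale a (x::'a::cstar_algebra) ^ n = cscale (a ^ n) (x ^ n)"
  by (induction n) (simp_all add: cscale_mult_cscale)

lemma adj_one [simp]: "adj (1::'a::cstar_algebra) = 1"
  using adj_mult[of "adj (1::'a)" 1] by (simp add: adj_adj)

lemma adj_zero [simp]: "adj (0::'a::cstar_algebra) = 0"
  using adj_add[of "0::'a" 0] by simp

lemma adj_minus: "adj (- x :: 'a::cstar_algebra) = - adj x"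
  using adj_add[of x "- x"] by (simp add: eq_neg_iff_add_eq_0 add.commute)

lemma adj_diff: "adj (x - y :: 'a::cstar_algebra) = adj x - adj y"
  using adj_add[of x "- y"] by (simp add: adj_minus)

lemma adj_scaleR: "adj (r *\<^sub>R x :: 'a::cstar_algebra) = r *\<^sub>R adj x"
  using adj_cscale[of "complex_of_real r" x] by (simp add: cscale_of_real)

lemma cscale_sum_left: "cscale (sum f S) (x::'a::cstar_algebra) = (\<Sum>s\<in>S. cscale (f s) x)"
  by (induction S rule: infinite_finite_induct) (simp_all add: cscale_add_left)

lemma cscale_sum_right: "cscale a (sum f S :: 'a::cstar_algebra) = (\<Sum>s\<in>S. cscale a (f s))"
  by (induction S rule: infinite_finite_induct) (simp_all add: cscale_add_right)

lemma cscale_eq_cscale_imp_eq_0: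
  assumes "cscale a x = cscale b (x::'a::cstar_algebra)" "a \<noteq> b"
  shows "x = 0"
proof -
  have "cscale (1 / (a - b)) (cscale (a - b) x) = 0"
    using assms(1) by (simp add: cscale_diff_left)
  then show ?thesis
    using assms(2) by (simp add: cscale_cscale)
qed

definition projection :: "'a::cstar_algebra \<Rightarrow> bool" where
  "projection p \<longleftrightarrow> adj p = p \<and> p * p = p"

lemma norm_projection_le_1:
  assumes "projection p"
  shows "norm p \<le> 1"
proof -
  have "(norm p)\<^sup>2 = norm p"
    using cstar_identity[of p] assms by (simp add: projection_def)
  then show ?thesis
    by (cases "norm p = 0") (auto simp: power2_eq_square)
qed

lemma projection_one_minus: "projection p \<Longrightarrow> projection (1 - p)"
  by (simp add: projection_def adj_diff algebra_simps)

lemma power_one_plus_cscale: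
  "(1 + cscale c (h::'a::cstar_algebra)) ^ n = (\<Sum>k\<le>n. cscale (of_nat (n choose k) * c ^ k) (h ^ k))"
  unfolding power_one_plus_binomial
  by (intro sum.cong refl) (simp add: cscale_power flip: cscale_of_nat add: cscale_cscale)

text \<open>Averaging against the N-th roots of unity isolates the linear coefficient of a polynomial of
  degree less than N; the factor unit_root N ^ ((N - 1) * j) is the inverse of unit_root N ^ j.\<close>

lemma sum_unit_root_power_one_plus_cscale:
  fixes h :: "'a::cstar_algebra"
  assumes "1 \<le> n" "n < N"
  shows "(\<Sum>j<N. cscale (unit_root N ^ ((N - 1) * j)) ((1 + cscale (r * unit_root N ^ j) h) ^ n))
         = cscale (of_nat N * of_nat n * r) h"
proof -
  let ?\<omega> = "unit_root N"
  have coeff: "(\<Sum>j<N. ?\<omega> ^ ((N - 1) * j) * (?\<omega> ^ j) ^ k) = (if k = 1 then of_nat N else 0)"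
    if "k \<le> n" for k
  proof -
    have "(\<Sum>j<N. ?\<omega> ^ ((N - 1) * j) * (?\<omega> ^ j) ^ k) = (\<Sum>j<N. (?\<omega> ^ (N - 1 + k)) ^ j)"
      by (simp flip: power_mult power_add add: algebra_simps)
    moreover have "N dvd N - 1 + k \<longleftrightarrow> k = 1"
    proof (cases k)
      case 0
      have "\<not> N dvd N - 1"
        using assms by (intro nat_dvd_not_less) auto
      then show ?thesis using 0 by simp
    next
      case (Suc l)
      then have "N dvd N - 1 + k \<longleftrightarrow> N dvd l"
        using assms by (simp add: add.commute[of _ l])
      also have "\<dots> \<longleftrightarrow> l = 0"
        using Suc assms that by (auto dest: dvd_imp_le[OF _ gr0I])
      finally show ?thesis using Suc by simp
    qed
    ultimately show ?thesis
      using assms by (simp add: sum_unit_root_powers)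
  qed
  have "(\<Sum>j<N. cscale (?\<omega> ^ ((N - 1) * j)) ((1 + cscale (r * ?\<omega> ^ j) h) ^ n))
      = (\<Sum>k\<le>n. \<Sum>j<N. cscale (?\<omega> ^ ((N - 1) * j) * (of_nat (n choose k) * (r * ?\<omega> ^ j) ^ k)) (h ^ k))"
    unfolding power_one_plus_cscale cscale_sum_right
    by (subst sum.swap) (simp add: cscale_cscale)
  also have "\<dots> = (\<Sum>k\<le>n. cscale (of_nat (n choose k) * r ^ k
                      * (\<Sum>j<N. ?\<omega> ^ ((N - 1) * j) * (?\<omega> ^ j) ^ k)) (h ^ k))"
    by (simp add: cscale_sum_left sum_distrib_left power_mult_distrib mult_ac)
  also have "\<dots> = (\<Sum>k\<le>n. if k = 1 then cscale (of_nat N * of_nat n * r) h else 0)"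
  proof (intro sum.cong refl)
    fix k assume "k \<in> {..n}"
    then show "cscale (of_nat (n choose k) * r ^ k * (\<Sum>j<N. ?\<omega> ^ ((N - 1) * j) * (?\<omega> ^ j) ^ k)) (h ^ k)
        = (if k = 1 then cscale (of_nat N * of_nat n * r) h else 0)"
      by (subst coeff) (auto simp: mult_ac)
  qed
  also have "\<dots> = cscale (of_nat N * of_nat n * r) h"
    using assms by simp
  finally show ?thesis .
qed

lemma norm_add_scaleR_le_1:
  fixes e u :: "'a::real_normed_vector"
  assumes "norm e \<le> 1" "norm (e + u) \<le> 1" "norm (e - u) \<le> 1" "\<bar>s\<bar> \<le> 1"
  shows "norm (e + s *\<^sub>R u) \<le> 1"
proof -
  have "e + s *\<^sub>R u = (1 - \<bar>s\<bar>) *\<^sub>R e + \<bar>s\<bar> *\<^sub>R (e + sgn s *\<^sub>R u)"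
    by (simp add: algebra_simps abs_mult_sgn)
  also have "norm \<dots> \<le> (1 - \<bar>s\<bar>) * norm e + \<bar>s\<bar> * norm (e + sgn s *\<^sub>R u)"
    using assms(4) by (intro order.trans[OF norm_triangle_ineq]) simp
  also have "\<dots> \<le> (1 - \<bar>s\<bar>) * 1 + \<bar>s\<bar> * 1"
    using assms by (intro add_mono mult_left_mono) (auto simp: sgn_real_def)
  finally show ?thesis by simp
qed

lemma norm_mult_le_1:
  fixes a b :: "'a::real_normed_algebra"
  assumes "norm a \<le> 1" "norm b \<le> 1"
  shows "norm (a * b) \<le> 1"
  using norm_mult_ineq[of a b] mult_le_one[OF assms(1) norm_ge_zero assms(2)] by linarith

context
  fixes e h :: "'a::cstar_algebra"
  assumes e: "projection e" and h_selfadjoint: "adj h = h"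
    and eh: "e * h = h" and he: "h * e = h"
    and plus: "norm (e + h) \<le> 1" and minus: "norm (e - h) \<le> 1"
begin

lemma corner_norm_add_square_le_1: "norm (e + h * h) \<le> 1"
proof -
  have "e + h * h = (1/2) *\<^sub>R ((e + h) * (e + h) + (e - h) * (e - h))"
    using e by (simp add: projection_def algebra_simps eh he flip: scaleR_2)
  also have "norm \<dots> \<le> (1/2) * (norm ((e + h) * (e + h)) + norm ((e - h) * (e - h)))"
    by (simp add: norm_triangle_ineq)
  also have "\<dots> \<le> (1/2) * (1 + 1)"
    using plus minus by (intro mult_left_mono add_mono norm_mult_le_1) auto
  finally show ?thesis by simp
qed

text \<open>By the C*-identity, the skew-adjoint element i h also satisfies the hypotheses on h.\<close>

lemma corner_norm_add_i_le_1:
  assumes s: "s = 1 \<or> s = -1"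
  shows "norm (e + s *\<^sub>R cscale \<i> h) \<le> 1"
proof -
  define k where "k = cscale \<i> h"
  have ee: "e * e = e" and e_selfadjoint: "adj e = e"
    using e by (auto simp: projection_def)
  have k_skew: "adj k = - k" and kk: "k * k = - (h * h)" and ek: "e * k = k" and ke: "k * e = k"
    unfolding k_def
    by (simp_all add: adj_cscale h_selfadjoint cscale_minus_left cscale_mult_cscale cscale_cscale eh he
        flip: cscale_mult_left cscale_mult_right)
  have "(norm (e + s *\<^sub>R k))\<^sup>2 = norm (adj (e + s *\<^sub>R k) * (e + s *\<^sub>R k))"
    by (rule cstar_identity[symmetric])
  also have "adj (e + s *\<^sub>R k) * (e + s *\<^sub>R k) = e + (s * s) *\<^sub>R (h * h)"
    by (simp add: adj_add adj_scaleR k_skew e_selfadjoint algebra_simps ee ek ke kk)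
  finally have "(norm (e + s *\<^sub>R k))\<^sup>2 \<le> 1"
    using corner_norm_add_square_le_1 s by auto
  then show ?thesis by (simp add: k_def power_le_one_iff)
qed

lemma corner_norm_add_cscale_le_1:
  assumes z: "cmod z \<le> 1/2"
  shows "norm (e + cscale z h) \<le> 1"
proof -
  define k where "k = cscale \<i> h"
  have "z = complex_of_real (Re z) + complex_of_real (Im z) * \<i>"
    by (simp add: complex_eq_iff)
  then have "cscale z h = Re z *\<^sub>R h + Im z *\<^sub>R k"
    unfolding k_def by (metis cscale_add_left cscale_cscale cscale_of_real)
  then have "e + cscale z h = (1/2) *\<^sub>R (e + (2 * Re z) *\<^sub>R h) + (1/2) *\<^sub>R (e + (2 * Im z) *\<^sub>R k)"
    by (simp add: algebra_simps flip: scaleR_2)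
  also have "norm \<dots> \<le> (1/2) * 1 + (1/2) * 1"
  proof (intro order.trans[OF norm_triangle_ineq] add_mono, simp_all)
    have "\<bar>2 * Re z\<bar> \<le> 1" "\<bar>2 * Im z\<bar> \<le> 1"
      using abs_Re_le_cmod[of z] abs_Im_le_cmod[of z] z by auto
    then show "norm (e + (2 * Re z) *\<^sub>R h) \<le> 1" "norm (e + (2 * Im z) *\<^sub>R k) \<le> 1"
      using norm_projection_le_1[OF e] plus minus corner_norm_add_i_le_1[of 1] corner_norm_add_i_le_1[of "-1"]
      by (auto simp: k_def intro!: norm_add_scaleR_le_1)
  qed
  finally show ?thesis by simp
qed

lemma corner_norm_bound:
  assumes n: "1 \<le> n"
  shows "real n * norm h \<le> 2"
proof -
  define N where "N = Suc n"
  let ?\<omega> = "unit_root N"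
  let ?X = "\<lambda>j. cscale (?\<omega> ^ ((N - 1) * j)) ((e + cscale (1/2 * ?\<omega> ^ j) h) ^ n)"
  have corner_eq: "e * (1 + cscale c h) ^ n = (e + cscale c h) ^ n" for c
    using e n by (intro corner_power_one_plus)
      (simp_all add: projection_def eh he flip: cscale_mult_left cscale_mult_right)
  have "(\<Sum>j<N. ?X j)
      = e * (\<Sum>j<N. cscale (?\<omega> ^ ((N - 1) * j)) ((1 + cscale (1/2 * ?\<omega> ^ j) h) ^ n))"
    by (simp add: sum_distrib_left cscale_mult_right flip: corner_eq)
  also have "\<dots> = e * cscale (of_nat N * of_nat n * (1/2)) h"
    using n by (subst sum_unit_root_power_one_plus_cscale) (simp_all add: N_def)
  also have "\<dots> = cscale (of_nat N * of_nat n / 2) h"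
    by (simp flip: cscale_mult_right add: eh)
  finally have sum_eq: "(\<Sum>j<N. ?X j) = cscale (of_nat N * of_nat n / 2) h" .
  have "norm (?X j) \<le> 1" for j
  proof -
    have "cmod (?\<omega> ^ m) = 1" for m
      by (simp add: unit_root_def norm_power)
    moreover have "norm ((e + cscale (1/2 * ?\<omega> ^ j) h) ^ n) \<le> 1"
      using corner_norm_add_cscale_le_1[of "1/2 * ?\<omega> ^ j"]
      by (intro order.trans[OF norm_power_ineq] power_le_one)
         (simp_all add: norm_mult norm_power unit_root_def)
    ultimately show ?thesis by (simp add: norm_cscale)
  qed
  then have "norm (\<Sum>j<N. ?X j) \<le> real N"
    using norm_sum[of ?X "{..<N}"] sum_mono[of "{..<N}" "\<lambda>j. norm (?X j)" "\<lambda>_. 1"] by simp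
  then have "real N * (real n * norm h / 2) \<le> real N * 1"
    unfolding sum_eq by (simp add: norm_cscale norm_mult norm_divide)
  then have "real n * norm h / 2 \<le> 1"
    by (rule mult_left_le_imp_le) (simp add: N_def)
  then show ?thesis by simp
qed

lemma corner_selfadjoint_eq_0: "h = 0"
proof (rule ccontr)
  assume "h \<noteq> 0"
  then obtain n :: nat where "3 / norm h < real n"
    using reals_Archimedean2 by blast
  then have "3 < real n * norm h"
    using \<open>h \<noteq> 0\<close> by (simp add: field_simps)
  moreover from this have "1 \<le> n"
    by (cases n) auto
  ultimately show False
    using corner_norm_bound by fastforce
qed

end

lemma corner_sum_eq_0:
  fixes x g :: "'a::cstar_algebra"
  assumes x: "projection x" and g: "adj g = g" "x * g = g" "g * x = g" "norm (x - g) \<le> 1"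
    and W: "finite W" "\<forall>c\<in>W. norm (x - f c) \<le> 1" and sum_eq_0: "g + (\<Sum>c\<in>W. f c) = 0"
  shows "g = 0"
proof -
  txt \<open>Rescaling g by the number of summands puts both x + t g and x - t g into the unit ball.\<close>
  define t where "t = 1 / (real (card W) + 1)"
  have t: "0 < t" "t \<le> 1" by (auto simp: t_def)
  have "t *\<^sub>R g = 0"
  proof (rule corner_selfadjoint_eq_0[OF x])
    show "adj (t *\<^sub>R g) = t *\<^sub>R g" "x * (t *\<^sub>R g) = t *\<^sub>R g" "t *\<^sub>R g * x = t *\<^sub>R g"
      using g by (simp_all add: adj_scaleR)
    have "x - t *\<^sub>R g = (1 - t) *\<^sub>R x + t *\<^sub>R (x - g)" by (simp add: algebra_simps)
    also have "norm \<dots> \<le> (1 - t) * 1 + t * 1"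
      using t norm_projection_le_1[OF x] g(4)
      by (intro order.trans[OF norm_triangle_ineq] add_mono) (simp_all add: mult_left_le)
    finally show "norm (x - t *\<^sub>R g) \<le> 1" by simp
    have "x + (\<Sum>c\<in>W. x - f c) = (real (card W) + 1) *\<^sub>R x + g"
      using sum_eq_0 by (simp add: sum_subtractf scaleR_conv_of_real algebra_simps eq_neg_iff_add_eq_0)
    then have "x + t *\<^sub>R g = t *\<^sub>R (x + (\<Sum>c\<in>W. x - f c))"
      by (simp add: t_def scaleR_add_right)
    also have "norm \<dots> \<le> t * (norm x + (\<Sum>c\<in>W. norm (x - f c)))"
      using t by (simp add: order.trans[OF norm_triangle_ineq] norm_sum add_left_mono)
    also have "\<dots> \<le> t * (1 + (\<Sum>c\<in>W. 1))"
      using t norm_projection_le_1[OF x] W(2) by (intro mult_left_mono add_mono sum_mono) auto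
    also have "\<dots> = 1" by (simp add: t_def)
    finally show "norm (x + t *\<^sub>R g) \<le> 1" .
  qed
  then show ?thesis using t by simp
qed

lemma projections_sum_one_orthogonal:
  fixes P :: "'v \<Rightarrow> 'a::cstar_algebra"
  assumes fin: "finite V" and proj: "\<forall>y\<in>V. projection (P y)" and sum_one: "(\<Sum>y\<in>V. P y) = 1"
    and a: "a \<in> V" and b: "b \<in> V" and ab: "a \<noteq> b"
  shows "P a * P b = 0"
proof -
  define x where "x = P a"
  define h where "h c = x * P c * x" for c
  have x: "projection x" using proj a by (simp add: x_def)
  then have xx: "x * x = x" and x_selfadjoint: "adj x = x" by (auto simp: projection_def)
  have P: "adj (P c) = P c" "P c * P c = P c" if "c \<in> V" for c
    using proj that by (auto simp: projection_def)
  define W where "W = V - {a, b}"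
  have "x = (\<Sum>c\<in>V. h c)"
    using sum_one xx by (simp add: h_def flip: sum_distrib_left sum_distrib_right)
  also have "\<dots> = (\<Sum>c\<in>insert a (insert b W). h c)"
    using a b by (intro sum.cong) (auto simp: W_def)
  also have "\<dots> = x + (h b + (\<Sum>c\<in>W. h c))"
    using fin ab xx by (simp add: W_def h_def flip: x_def)
  finally have sum_eq_0: "h b + (\<Sum>c\<in>W. h c) = 0" by simp
  have h_le: "norm (x - h c) \<le> 1" if "c \<in> V" for c
  proof -
    have "x - h c = x * (1 - P c) * x" by (simp add: h_def algebra_simps xx)
    moreover have "norm (1 - P c) \<le> 1"
      using proj that by (simp add: norm_projection_le_1 projection_one_minus)
    ultimately show ?thesis
      using norm_projection_le_1[OF x] by (simp add: norm_mult_le_1)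
  qed
  have "h b = 0"
  proof (rule corner_sum_eq_0[OF x _ _ _ h_le[OF b] _ _ sum_eq_0])
    show "adj (h b) = h b" "x * h b = h b" "h b * x = h b"
      using P[OF b] by (simp_all add: h_def adj_mult x_selfadjoint xx mult.assoc flip: mult.assoc[of x x])
  qed (use fin h_le in \<open>auto simp: W_def\<close>)
  moreover have "adj (P b * x) * (P b * x) = h b"
    using P[OF b] by (simp add: h_def adj_mult x_selfadjoint mult.assoc flip: mult.assoc[of "P b"])
  then have "(norm (P b * x))\<^sup>2 = norm (h b)"
    by (simp flip: cstar_identity)
  ultimately have "P b * x = 0" by simp
  then have "adj (P b * x) = 0" by simp
  then show ?thesis using P[OF b] by (simp add: adj_mult x_selfadjoint flip: x_def)
qed


section \<open>Precolored graphs, completions and free products\<close>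

lemma precolored_class_subset: "precolored V E \<Longrightarrow> X \<in> set E \<Longrightarrow> X \<subseteq> V \<times> V - Id_on V"
  by (auto simp: precolored_def in_set_conv_nth)

lemma precolored_Union_subset: "precolored V E \<Longrightarrow> \<Union>(set E) \<subseteq> V \<times> V - Id_on V"
  using precolored_class_subset by blast

lemma precolored_class_unique:
  assumes "precolored V C" "X \<in> set C" "Y \<in> set C" "p \<in> X" "p \<in> Y"
  shows "X = Y"
  using assms unfolding precolored_def in_set_conv_nth by blast

lemma precolored_append:
  assumes "precolored V L" "precolored V M" "\<And>X Y. X \<in> set L \<Longrightarrow> Y \<in> set M \<Longrightarrow> X \<inter> Y = {}"
  shows "precolored V (L @ M)"
  unfolding precolored_def
proof (intro conjI allI impI)
  show "finite V" using assms(1) by (simp add: precolored_def)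
  show "(L @ M) ! i \<subseteq> V \<times> V - Id_on V" if "i < length (L @ M)" for i
    using assms(1,2) that by (auto simp: precolored_def nth_append)
  fix i j assume ij: "i < length (L @ M)" "j < length (L @ M)" "i \<noteq> j"
  consider "i < length L" "j < length L" | "i < length L" "\<not> j < length L"
    | "\<not> i < length L" "j < length L" | "\<not> i < length L" "\<not> j < length L"
    by blast
  then show "(L @ M) ! i \<inter> (L @ M) ! j = {}"
  proof cases
    case 1
    then show ?thesis using assms(1) ij by (simp add: precolored_def nth_append)
  next
    case 2
    then show ?thesis using assms(3)[OF nth_mem nth_mem] ij by (simp add: nth_append)
  next
    case 3
    then have "i - length L < length M" using ij by simp
    then show ?thesis
      using assms(3)[OF nth_mem[of j] nth_mem[of "i - length L"]] ij 3 by (auto simp: nth_append)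
  next
    case 4
    then show ?thesis using assms(2) ij by (simp add: precolored_def nth_append)
  qed
qed

definition missing_pairs :: "'a set \<Rightarrow> ('a \<times> 'a) set list \<Rightarrow> ('a \<times> 'a) set" where
  "missing_pairs V E = V \<times> V - Id_on V - \<Union>(set E)"

lemma completion_eq: "completion V E = E @ [missing_pairs V E]"
  by (simp add: completion_def missing_pairs_def)

lemma precolored_completion:
  assumes "precolored V E"
  shows "precolored V (completion V E)"
  unfolding completion_eq using assms
  by (intro precolored_append) (auto simp: precolored_def missing_pairs_def)

lemma Union_completion: "precolored V E \<Longrightarrow> \<Union>(set (completion V E)) = V \<times> V - Id_on V"
  using precolored_Union_subset by (fastforce simp: completion_eq missing_pairs_def)

lemma laplacian_eq_color:
  assumes "precolored V C" "k < length C" "(p, q) \<in> C ! k"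
  shows "laplacian C c p q = c k"
proof -
  have "p \<noteq> q" using assms unfolding precolored_def by blast
  moreover have "(THE k'. k' < length C \<and> (p, q) \<in> C ! k') = k"
    using assms unfolding precolored_def by (intro the_equality) blast+
  ultimately show ?thesis by (simp add: laplacian_def)
qed

lemma laplacian_eq_iff_same_class:
  assumes pc: "precolored V C" and cover: "\<Union>(set C) = V \<times> V - Id_on V"
    and inj: "inj_on c {..<length C}"
    and V: "a \<in> V" "z \<in> V" "x \<in> V" "b \<in> V" and off_diagonal: "a \<noteq> z" "x \<noteq> b"
  shows "laplacian C c a z = laplacian C c x b \<longleftrightarrow> (\<exists>X\<in>set C. (a, z) \<in> X \<and> (x, b) \<in> X)"
proof -
  have "(a, z) \<in> \<Union>(set C)" "(x, b) \<in> \<Union>(set C)"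
    using cover V off_diagonal by auto
  then obtain k l where k: "k < length C" "(a, z) \<in> C ! k" and l: "l < length C" "(x, b) \<in> C ! l"
    by (auto simp: in_set_conv_nth)
  have "laplacian C c a z = laplacian C c x b \<longleftrightarrow> k = l"
    using laplacian_eq_color[OF pc k] laplacian_eq_color[OF pc l] inj k(1) l(1)
    by (auto dest: inj_onD)
  also have "\<dots> \<longleftrightarrow> (\<exists>X\<in>set C. (a, z) \<in> X \<and> (x, b) \<in> X)"
  proof
    assume "k = l"
    then show "\<exists>X\<in>set C. (a, z) \<in> X \<and> (x, b) \<in> X"
      using k l nth_mem by blast
  next
    assume "\<exists>X\<in>set C. (a, z) \<in> X \<and> (x, b) \<in> X"
    then obtain X where X: "X \<in> set C" "(a, z) \<in> X" "(x, b) \<in> X" by blast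
    then have "C ! k = C ! l"
      using precolored_class_unique[OF pc nth_mem[OF k(1)] X(1) k(2)]
        precolored_class_unique[OF pc nth_mem[OF l(1)] X(1) l(2)] by simp
    then show "k = l"
      using pc k l unfolding precolored_def by blast
  qed
  finally show ?thesis .
qed

definition free_prod_left :: "'c set \<Rightarrow> ('a \<times> 'a) set \<Rightarrow> (('a \<times> 'c) \<times> ('a \<times> 'c)) set" where
  "free_prod_left Z R = {((i, \<alpha>), (j, \<alpha>)) | i j \<alpha>. (i, j) \<in> R \<and> \<alpha> \<in> Z}"

definition free_prod_right :: "'a set \<Rightarrow> ('c \<times> 'c) set \<Rightarrow> (('a \<times> 'c) \<times> ('a \<times> 'c)) set" where
  "free_prod_right T R = {((i, \<alpha>), (j, \<beta>)) | i j \<alpha> \<beta>. i \<in> T \<and> j \<in> T \<and> (\<alpha>, \<beta>) \<in> R}"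

lemma mem_free_prod_left [simp]:
  "((i, \<alpha>), (j, \<beta>)) \<in> free_prod_left Z R \<longleftrightarrow> (i, j) \<in> R \<and> \<alpha> \<in> Z \<and> \<beta> = \<alpha>"
  by (auto simp: free_prod_left_def)

lemma free_prod_edges_eq:
  "free_prod_edges E Z T F = map (free_prod_left Z) E @ map (free_prod_right T) F"
  by (simp add: free_prod_edges_def free_prod_left_def free_prod_right_def)

lemma precolored_map:
  assumes "precolored U L" "finite V"
    and "\<And>X. X \<subseteq> U \<times> U - Id_on U \<Longrightarrow> f X \<subseteq> V \<times> V - Id_on V"
    and "\<And>X Y. f X \<inter> f Y = f (X \<inter> Y)" "f {} = {}"
  shows "precolored V (map f L)"
  using assms unfolding precolored_def by auto

lemma free_prod_left_Int: "free_prod_left Z X \<inter> free_prod_left Z Y = free_prod_left Z (X \<inter> Y)"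
  by (auto simp: free_prod_left_def)

lemma free_prod_right_Int: "free_prod_right T X \<inter> free_prod_right T Y = free_prod_right T (X \<inter> Y)"
  by (auto simp: free_prod_right_def)

lemma free_prod_left_subset:
  "X \<subseteq> T \<times> T - Id_on T \<Longrightarrow> free_prod_left Z X \<subseteq> (T \<times> Z) \<times> (T \<times> Z) - Id_on (T \<times> Z)"
  by (auto simp: free_prod_left_def)

lemma free_prod_right_subset:
  "Y \<subseteq> Z \<times> Z - Id_on Z \<Longrightarrow> free_prod_right T Y \<subseteq> (T \<times> Z) \<times> (T \<times> Z) - Id_on (T \<times> Z)"
  by (auto simp: free_prod_right_def)

lemma free_prod_left_right_disjoint:
  "Y \<inter> Id_on Z = {} \<Longrightarrow> free_prod_left Z X \<inter> free_prod_right T Y = {}"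
  by (auto simp: free_prod_left_def free_prod_right_def)

lemma precolored_free_prod_edges:
  assumes E: "precolored T E" and F: "precolored Z F"
  shows "precolored (T \<times> Z) (free_prod_edges E Z T F)"
  unfolding free_prod_edges_eq
proof (rule precolored_append)
  have fin: "finite (T \<times> Z)" using E F by (simp add: precolored_def)
  show "precolored (T \<times> Z) (map (free_prod_left Z) E)"
    by (rule precolored_map[OF E fin free_prod_left_subset free_prod_left_Int])
      (simp_all add: free_prod_left_def)
  show "precolored (T \<times> Z) (map (free_prod_right T) F)"
    by (rule precolored_map[OF F fin free_prod_right_subset free_prod_right_Int])
      (simp_all add: free_prod_right_def)
  fix X Y assume "X \<in> set (map (free_prod_left Z) E)" "Y \<in> set (map (free_prod_right T) F)"
  then show "X \<inter> Y = {}"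
    using precolored_Union_subset[OF F] by (auto intro!: free_prod_left_right_disjoint)
qed

lemma set_free_prod_edges_completion:
  "set (free_prod_edges (completion T E) Z T F)
     = insert (free_prod_left Z (missing_pairs T E)) (set (free_prod_edges E Z T F))"
  by (auto simp: free_prod_edges_eq completion_eq)

lemma missing_pairs_free_prod_edges:
  assumes E: "precolored T E" and F: "precolored Z F"
  shows "missing_pairs (T \<times> Z) (free_prod_edges E Z T F) \<inter> {(p, q). snd p = snd q}
           = free_prod_left Z (missing_pairs T E)"
    and "missing_pairs (T \<times> Z) (free_prod_edges (completion T E) Z T F)
           = missing_pairs (T \<times> Z) (free_prod_edges E Z T F) - {(p, q). snd p = snd q}"
  using precolored_class_subset[OF E] precolored_class_subset[OF F]
  by (fastforce simp: missing_pairs_def free_prod_edges_eq completion_eq free_prod_left_def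
      free_prod_right_def)+

lemma free_prod_left_Union: "free_prod_left Z (\<Union>\<X>) = (\<Union>X\<in>\<X>. free_prod_left Z X)"
  by (auto simp: free_prod_left_def)

lemma rtrancl_free_prod_left_snd_eq:
  assumes "(p, q) \<in> (free_prod_left Z R \<union> (free_prod_left Z R)\<inverse>)\<^sup>*"
  shows "snd p = snd q"
  using assms by (induction rule: rtrancl_induct) (auto simp: free_prod_left_def)

lemma rtrancl_free_prod_left:
  assumes "(i, j) \<in> (R \<union> R\<inverse>)\<^sup>*" "\<alpha> \<in> Z"
  shows "((i, \<alpha>), (j, \<alpha>)) \<in> (free_prod_left Z R \<union> (free_prod_left Z R)\<inverse>)\<^sup>*"
  using assms(1)
proof (induction rule: rtrancl_induct)
  case (step j k)
  then have "((j, \<alpha>), (k, \<alpha>)) \<in> free_prod_left Z R \<union> (free_prod_left Z R)\<inverse>"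
    using assms(2) by auto
  then show ?case using step.IH by (rule rtrancl_into_rtrancl[rotated])
qed simp


section \<open>Magic unitaries commuting with relations\<close>

text \<open>w commutes with the 0-1 adjacency matrix of R: entrywise, (w A_R)_{xz} = (A_R w)_{xz}
  amounts to w x a * w b z = 0 whenever exactly one of (a, z), (x, b) is in R.\<close>

definition commutes_rel :: "'v set \<Rightarrow> ('v \<Rightarrow> 'v \<Rightarrow> 'a::cstar_algebra) \<Rightarrow> ('v \<times> 'v) set \<Rightarrow> bool" where
  "commutes_rel V w R \<longleftrightarrow>
     (\<forall>x\<in>V. \<forall>a\<in>V. \<forall>b\<in>V. \<forall>z\<in>V. ((a, z) \<in> R) \<noteq> ((x, b) \<in> R) \<longrightarrow> w x a * w b z = 0)"

locale magic_unitary =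
  fixes V :: "'v set" and w :: "'v \<Rightarrow> 'v \<Rightarrow> 'a::cstar_algebra"
  assumes finite: "finite V" and magic: "magic_biunitary V w"
begin

lemma projection_entry: "x \<in> V \<Longrightarrow> y \<in> V \<Longrightarrow> projection (w x y)"
  using magic by (simp add: magic_biunitary_def projection_def)

lemma row_sum: "x \<in> V \<Longrightarrow> (\<Sum>y\<in>V. w x y) = 1"
  using magic by (simp add: magic_biunitary_def)

lemma col_sum: "y \<in> V \<Longrightarrow> (\<Sum>x\<in>V. w x y) = 1"
  using magic by (simp add: magic_biunitary_def)

lemma row_mult: "x \<in> V \<Longrightarrow> a \<in> V \<Longrightarrow> y \<in> V \<Longrightarrow> w x a * w x y = (if y = a then w x a else 0)"
  using projections_sum_one_orthogonal[OF finite, of "w x" a y] projection_entry row_sum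
  by (auto simp: projection_def)

lemma col_mult: "y \<in> V \<Longrightarrow> b \<in> V \<Longrightarrow> z \<in> V \<Longrightarrow> w y z * w b z = (if y = b then w b z else 0)"
  using projections_sum_one_orthogonal[OF finite, of "\<lambda>x. w x z" y b] projection_entry col_sum
  by (auto simp: projection_def)

lemma commutes_lap_sandwich:
  assumes commute: "commutes_lap V w d" and V: "x \<in> V" "a \<in> V" "b \<in> V" "z \<in> V"
  shows "cscale (d a z) (w x a * w b z) = cscale (d x b) (w x a * w b z)"
proof -
  txt \<open>Multiply the (x, z) entry of w d = d w by w x a on the left and by w b z on the right.\<close>
  have row: "w x a * (\<Sum>y\<in>V. cscale (d y z) (w x y)) = cscale (d a z) (w x a)"
    using V finite by (simp add: sum_distrib_left row_mult if_distrib sum.delta cong: if_cong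
        flip: cscale_mult_right)
  have col: "(\<Sum>y\<in>V. cscale (d x y) (w y z)) * w b z = cscale (d x b) (w b z)"
    using V finite by (simp add: sum_distrib_right col_mult if_distrib sum.delta' cong: if_cong
        flip: cscale_mult_left)
  have "cscale (d a z) (w x a * w b z) = w x a * (\<Sum>y\<in>V. cscale (d y z) (w x y)) * w b z"
    by (simp add: row cscale_mult_left)
  also have "\<dots> = w x a * ((\<Sum>y\<in>V. cscale (d x y) (w y z)) * w b z)"
    using commute V by (simp add: commutes_lap_def mult.assoc)
  also have "\<dots> = cscale (d x b) (w x a * w b z)"
    by (simp add: col cscale_mult_right)
  finally show ?thesis .
qed

lemma commutes_lap_iff:
  "commutes_lap V w d \<longleftrightarrow>
     (\<forall>x\<in>V. \<forall>a\<in>V. \<forall>b\<in>V. \<forall>z\<in>V. d a z \<noteq> d x b \<longrightarrow> w x a * w b z = 0)"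
proof (intro iffI ballI impI)
  fix x a b z assume "commutes_lap V w d" "x \<in> V" "a \<in> V" "b \<in> V" "z \<in> V" "d a z \<noteq> d x b"
  then show "w x a * w b z = 0"
    using commutes_lap_sandwich cscale_eq_cscale_imp_eq_0 by blast
next
  assume vanish: "\<forall>x\<in>V. \<forall>a\<in>V. \<forall>b\<in>V. \<forall>z\<in>V. d a z \<noteq> d x b \<longrightarrow> w x a * w b z = 0"
  show "commutes_lap V w d"
    unfolding commutes_lap_def
  proof (intro ballI)
    fix x z assume V: "x \<in> V" "z \<in> V"
    have "(\<Sum>y\<in>V. cscale (d y z) (w x y)) = (\<Sum>y\<in>V. cscale (d y z) (w x y * (\<Sum>b\<in>V. w b z)))"
      using col_sum V by simp
    also have "\<dots> = (\<Sum>y\<in>V. \<Sum>b\<in>V. cscale (d y z) (w x y * w b z))"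
      by (simp add: sum_distrib_left cscale_sum_right)
    also have "\<dots> = (\<Sum>y\<in>V. \<Sum>b\<in>V. cscale (d x b) (w x y * w b z))"
    proof (intro sum.cong refl)
      fix y b assume "y \<in> V" "b \<in> V"
      then show "cscale (d y z) (w x y * w b z) = cscale (d x b) (w x y * w b z)"
        using vanish V by (cases "d y z = d x b") auto
    qed
    also have "\<dots> = (\<Sum>b\<in>V. cscale (d x b) ((\<Sum>y\<in>V. w x y) * w b z))"
      by (subst sum.swap) (simp add: sum_distrib_right cscale_sum_right)
    also have "\<dots> = (\<Sum>y\<in>V. cscale (d x y) (w y z))"
      using row_sum V by simp
    finally show "(\<Sum>y\<in>V. cscale (d y z) (w x y)) = (\<Sum>y\<in>V. cscale (d x y) (w y z))" .
  qed
qed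

lemma mult_eq_0_via_row:
  assumes "y \<in> V" "\<And>c. c \<in> V \<Longrightarrow> w x a * w y c * w b z = 0"
  shows "w x a * w b z = 0"
proof -
  have "w x a * w b z = (\<Sum>c\<in>V. w x a * w y c * w b z)"
    using row_sum[OF assms(1)] by (simp flip: sum_distrib_left sum_distrib_right)
  then show ?thesis using assms(2) by simp
qed

lemma mult_eq_0_via_col:
  assumes "c \<in> V" "\<And>y. y \<in> V \<Longrightarrow> w x a * w y c * w b z = 0"
  shows "w x a * w b z = 0"
proof -
  have "w x a * w b z = (\<Sum>y\<in>V. w x a * w y c * w b z)"
    using col_sum[OF assms(1)] by (simp flip: sum_distrib_left sum_distrib_right)
  then show ?thesis using assms(2) by simp
qed

lemma commutes_rel_Id: "commutes_rel V w Id"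
  unfolding commutes_rel_def by (auto simp: row_mult col_mult)

lemma commutes_rel_cong:
  "commutes_rel V w R \<Longrightarrow> R \<inter> V \<times> V = R' \<inter> V \<times> V \<Longrightarrow> commutes_rel V w R'"
  unfolding commutes_rel_def by blast

lemma commutes_rel_Union: "(\<And>R. R \<in> \<R> \<Longrightarrow> commutes_rel V w R) \<Longrightarrow> commutes_rel V w (\<Union>\<R>)"
  unfolding commutes_rel_def by blast

lemma commutes_rel_Un: "commutes_rel V w R \<Longrightarrow> commutes_rel V w R' \<Longrightarrow> commutes_rel V w (R \<union> R')"
  unfolding commutes_rel_def by blast

lemma commutes_rel_Int: "commutes_rel V w R \<Longrightarrow> commutes_rel V w R' \<Longrightarrow> commutes_rel V w (R \<inter> R')"
  unfolding commutes_rel_def by blast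

lemma commutes_rel_Diff: "commutes_rel V w R \<Longrightarrow> commutes_rel V w R' \<Longrightarrow> commutes_rel V w (R - R')"
  unfolding commutes_rel_def by blast

lemma commutes_rel_converse:
  assumes "commutes_rel V w R"
  shows "commutes_rel V w (R\<inverse>)"
  unfolding commutes_rel_def
proof (intro ballI impI)
  fix x a b z assume V: "x \<in> V" "a \<in> V" "b \<in> V" "z \<in> V" and "((a, z) \<in> R\<inverse>) \<noteq> ((x, b) \<in> R\<inverse>)"
  then have "w b z * w x a = 0" using assms unfolding commutes_rel_def by auto
  then have "adj (w b z * w x a) = 0" by simp
  then show "w x a * w b z = 0" using projection_entry V by (simp add: adj_mult projection_def)
qed

lemma commutes_rel_relcomp:
  assumes R: "commutes_rel V w R" and S: "commutes_rel V w S" and S_V: "S \<subseteq> V \<times> V"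
  shows "commutes_rel V w (R O S)"
  unfolding commutes_rel_def
proof (intro ballI impI)
  fix x a b z assume V: "x \<in> V" "a \<in> V" "b \<in> V" "z \<in> V"
    and ne: "((a, z) \<in> R O S) \<noteq> ((x, b) \<in> R O S)"
  have vanish: "w x a * w y c * w b z = 0"
    if "y \<in> V" "c \<in> V" "(x, y) \<in> R \<longleftrightarrow> (a, c) \<in> R \<Longrightarrow> ((y, b) \<in> S) \<noteq> ((c, z) \<in> S)" for y c
  proof (cases "(x, y) \<in> R \<longleftrightarrow> (a, c) \<in> R")
    case True
    then have "w y c * w b z = 0" using S V that unfolding commutes_rel_def by blast
    then show ?thesis by (simp add: mult.assoc)
  next
    case False
    then have "w x a * w y c = 0" using R V that unfolding commutes_rel_def by blast
    then show ?thesis by simp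
  qed
  show "w x a * w b z = 0"
  proof (cases "(x, b) \<in> R O S")
    case True
    then obtain y where "(x, y) \<in> R" "(y, b) \<in> S" by blast
    then show ?thesis
      using ne S_V by (intro mult_eq_0_via_row[of y] vanish) auto
  next
    case False
    then obtain c where "(a, c) \<in> R" "(c, z) \<in> S" using ne by blast
    then show ?thesis
      using False S_V by (intro mult_eq_0_via_col[of c] vanish) auto
  qed
qed

lemma commutes_rel_relpow:
  assumes "commutes_rel V w R" "R \<subseteq> V \<times> V"
  shows "commutes_rel V w (R ^^ n)"
  by (induction n) (simp_all add: commutes_rel_Id commutes_rel_relcomp assms)

lemma commutes_rel_rtrancl:
  assumes "commutes_rel V w R" "R \<subseteq> V \<times> V"
  shows "commutes_rel V w (R\<^sup>*)"
  unfolding rtrancl_is_UN_relpow using commutes_rel_relpow[OF assms]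
  by (intro commutes_rel_Union) blast

lemma commutes_rel_split:
  assumes "commutes_rel V w S"
  shows "commutes_rel V w R \<longleftrightarrow> commutes_rel V w (R \<inter> S) \<and> commutes_rel V w (R - S)"
  using commutes_rel_Un[of "R \<inter> S" "R - S"] commutes_rel_Int commutes_rel_Diff assms
  by (metis Int_Diff_Un)

lemma mult_eq_0_if_one_diagonal:
  "x \<in> V \<Longrightarrow> a \<in> V \<Longrightarrow> b \<in> V \<Longrightarrow> z \<in> V \<Longrightarrow> (a = z) \<noteq> (x = b) \<Longrightarrow> w x a * w b z = 0"
  using commutes_rel_Id unfolding commutes_rel_def by auto

context
  fixes C and c :: "nat \<Rightarrow> complex"
  assumes pc: "precolored V C" and cover: "\<Union>(set C) = V \<times> V - Id_on V"
    and inj: "inj_on c {..<length C}"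
begin

lemma commutes_rel_if_commutes_lap_laplacian:
  assumes vanish: "commutes_lap V w (laplacian C c)" and X: "X \<in> set C"
  shows "commutes_rel V w X"
  unfolding commutes_rel_def
proof (intro ballI impI)
  fix x a b z assume V: "x \<in> V" "a \<in> V" "b \<in> V" "z \<in> V" and ne: "((a, z) \<in> X) \<noteq> ((x, b) \<in> X)"
  show "w x a * w b z = 0"
  proof (cases "a = z \<or> x = b")
    case True
    then show ?thesis
      using mult_eq_0_if_one_diagonal V ne precolored_class_subset[OF pc X] by blast
  next
    case False
    have "(a, z) \<notin> Y \<or> (x, b) \<notin> Y" if "Y \<in> set C" for Y
      using ne precolored_class_unique[OF pc X that] by blast
    then have "laplacian C c a z \<noteq> laplacian C c x b"
      using laplacian_eq_iff_same_class[OF pc cover inj] V False by simp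
    then show ?thesis using vanish V unfolding commutes_lap_iff by blast
  qed
qed

lemma commutes_lap_laplacian_if_commutes_rel:
  assumes commute: "\<forall>X\<in>set C. commutes_rel V w X"
  shows "commutes_lap V w (laplacian C c)"
  unfolding commutes_lap_iff
proof (intro ballI impI)
  fix x a b z assume V: "x \<in> V" "a \<in> V" "b \<in> V" "z \<in> V"
    and ne: "laplacian C c a z \<noteq> laplacian C c x b"
  show "w x a * w b z = 0"
  proof (cases "a = z \<or> x = b")
    case True
    then have "(a = z) \<noteq> (x = b)" using ne by (auto simp: laplacian_def)
    then show ?thesis using mult_eq_0_if_one_diagonal V by blast
  next
    case False
    then obtain X where X: "X \<in> set C" "(a, z) \<in> X"
      using cover V by blast
    moreover have "(x, b) \<notin> X"
      using X ne laplacian_eq_iff_same_class[OF pc cover inj] V False by auto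
    ultimately show ?thesis
      using commute V unfolding commutes_rel_def by blast
  qed
qed

lemma commutes_lap_laplacian_iff:
  "commutes_lap V w (laplacian C c) \<longleftrightarrow> (\<forall>X\<in>set C. commutes_rel V w X)"
  using commutes_rel_if_commutes_lap_laplacian commutes_lap_laplacian_if_commutes_rel by blast

end

lemma commutes_lap_laplacian_completion_iff:
  assumes "precolored V E" "inj_on c {..<length (completion V E)}"
  shows "commutes_lap V w (laplacian (completion V E) c) \<longleftrightarrow>
           (\<forall>X\<in>set E. commutes_rel V w X) \<and> commutes_rel V w (missing_pairs V E)"
  using commutes_lap_laplacian_iff[OF precolored_completion Union_completion, OF assms(1,1,2)]
  by (auto simp: completion_eq)

end

lemma commutes_rel_same_snd:
  assumes "magic_unitary (T \<times> Z) w" and E: "precolored T E" and conn: "pc_connected T E"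
    and commute: "\<forall>X\<in>set E. commutes_rel (T \<times> Z) w (free_prod_left Z X)"
  shows "commutes_rel (T \<times> Z) w {(p, q). snd p = snd q}"
proof -
  interpret magic_unitary "T \<times> Z" w by fact
  define R where "R = free_prod_left Z (\<Union>(set E))"
  have "commutes_rel (T \<times> Z) w (R \<union> R\<inverse>)"
    using commute unfolding R_def free_prod_left_Union
    by (blast intro: commutes_rel_Un commutes_rel_converse commutes_rel_Union)
  moreover have "R \<union> R\<inverse> \<subseteq> (T \<times> Z) \<times> (T \<times> Z)"
    using precolored_Union_subset[OF E] by (auto simp: R_def free_prod_left_def)
  ultimately have "commutes_rel (T \<times> Z) w ((R \<union> R\<inverse>)\<^sup>*)"
    by (rule commutes_rel_rtrancl)
  moreover have "(R \<union> R\<inverse>)\<^sup>* \<inter> (T \<times> Z) \<times> (T \<times> Z) = {(p, q). snd p = snd q} \<inter> (T \<times> Z) \<times> (T \<times> Z)"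
  proof (intro equalityI subsetI)
    fix pq assume "pq \<in> {(p, q). snd p = snd q} \<inter> (T \<times> Z) \<times> (T \<times> Z)"
    then obtain i j \<alpha> where "pq = ((i, \<alpha>), (j, \<alpha>))" "i \<in> T" "j \<in> T" "\<alpha> \<in> Z" by auto
    with conn show "pq \<in> (R \<union> R\<inverse>)\<^sup>* \<inter> (T \<times> Z) \<times> (T \<times> Z)"
      unfolding R_def pc_connected_def Let_def by (auto intro: rtrancl_free_prod_left)
  qed (auto simp: R_def dest: rtrancl_free_prod_left_snd_eq)
  ultimately show ?thesis
    by (rule commutes_rel_cong)
qed

theorem proposition7p1:
  fixes T :: "'a set" and E :: "('a \<times> 'a) set list"
    and Z :: "'c set" and F :: "('c \<times> 'c) set list"
    and c1 c2 :: "nat \<Rightarrow> complex"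
    and w :: "'a \<times> 'c \<Rightarrow> 'a \<times> 'c \<Rightarrow> 'b::cstar_algebra"
  assumes "precolored T E" and "precolored Z F"
    and "pc_connected T E"
    and "inj_on c1 {..< length (completion (T \<times> Z) (free_prod_edges (completion T E) Z T F))}"
    and "inj_on c2 {..< length (completion (T \<times> Z) (free_prod_edges E Z T F))}"
    and "magic_biunitary (T \<times> Z) w"
  shows "commutes_lap (T \<times> Z) w
           (laplacian (completion (T \<times> Z) (free_prod_edges (completion T E) Z T F)) c1)
         \<longleftrightarrow>
         commutes_lap (T \<times> Z) w
           (laplacian (completion (T \<times> Z) (free_prod_edges E Z T F)) c2)"
proof -
  have "magic_unitary (T \<times> Z) w"
    using assms(1,2,6) by unfold_locales (simp_all add: precolored_def)
  then interpret magic_unitary "T \<times> Z" w .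
  let ?commutes = "commutes_rel (T \<times> Z) w"
  define S where "S = {(p :: 'a \<times> 'c, q :: 'a \<times> 'c). snd p = snd q}"
  define R where "R = missing_pairs (T \<times> Z) (free_prod_edges E Z T F)"
  have "commutes_lap (T \<times> Z) w (laplacian (completion (T \<times> Z) (free_prod_edges (completion T E) Z T F)) c1)
      \<longleftrightarrow> (\<forall>X\<in>set (free_prod_edges E Z T F). ?commutes X) \<and> ?commutes (R \<inter> S) \<and> ?commutes (R - S)"
    using commutes_lap_laplacian_completion_iff[OF precolored_free_prod_edges assms(4)]
      precolored_completion assms(1,2)
    by (auto simp: set_free_prod_edges_completion missing_pairs_free_prod_edges R_def S_def)
  moreover have "commutes_lap (T \<times> Z) w (laplacian (completion (T \<times> Z) (free_prod_edges E Z T F)) c2)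
      \<longleftrightarrow> (\<forall>X\<in>set (free_prod_edges E Z T F). ?commutes X) \<and> ?commutes R"
    using commutes_lap_laplacian_completion_iff[OF precolored_free_prod_edges assms(5)] assms(1,2)
    by (simp add: R_def)
  moreover have "?commutes S" if "\<forall>X\<in>set (free_prod_edges E Z T F). ?commutes X"
    using commutes_rel_same_snd[OF \<open>magic_unitary (T \<times> Z) w\<close> assms(1,3)] that
    by (simp add: S_def free_prod_edges_eq)
  ultimately show ?thesis
    using commutes_rel_split by blast
qed

end
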